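(* Consider the randomized procedure $\mathfrak{h}_2$ described in the context, run on $D=\{\mathbf{v}_1,\dots,\mathbf{v}_q\}$ with parameters $\varepsilon,\eta$ and $T=d^2$ iterations, producing $P_{\mathrm{avg}}=\frac1T\sum_{t=1}^T P_t$. Then $\mathbb{E}\left[\max_{i\in[d]}\left|\frac1q w(D,i)-\sqrt{\tfrac{2}{d}}\,\frac1q\, w(P_{\mathrm{avg}},i)\right|\right]\le 2\sqrt{\frac{2\log(2/\eta)}{d^2}}+11\sqrt2\,\frac{\log d}{q\varepsilon\sqrt d}+\frac4d+2d\exp(-q/4)+\eta,$ where the expectation is over all randomness of the procedure (quantization, coordinate sampling and Laplace noise).
   Context: Let $d\ge1$, $\eta>0$ with $2/\eta$ an integer, $S=\{-1,-1+\eta,\dots,1-\eta,1\}$. Let $D=\{\mathbf{v}_1,\dots,\mathbf{v}_q\}\subset\mathbb{R}^{d}$ with all coordinates $v_{ji}\in[-\sqrt{2/d},\sqrt{2/d}]$, and let $w(D,i)=\sum_{j=1}^q v_{ji}$. Quantization: for $x\in[-1,1]$ let $k=\lfloor (x+1)/\eta\rfloor$ and let $Q(x)=-1+k\eta$ with probability $\frac{(k+1)\eta-1-x}{\eta}$ and $Q(x)=-1+(k+1)\eta$ with probability $\frac{x+1-k\eta}{\eta}$, independently across applications; $Q$ acts coordinatewise. Let $D_Q=\{\tilde v_j=Q(\sqrt{d/2}\,\mathbf{v}_j)\}_{j=1}^q$ and $w(D_Q,i)=\sum_j\tilde v_{ji}$. For a distribution $P$ on $S^{d}$ with $i$-th marginal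 $P_i$, $w(P,i)=q\sum_{s\in S}sP_i(s)$. Let $P_0$ be uniform on $S^{d}$. For $t=1,\dots,T$: sample $i(t)\in[d]$ with probability proportional to $\exp(\varepsilon|w(P_{t-1},i)-w(D_Q,i)|)$; set $\mu_{i(t)}=w(D_Q,i(t))+\mathrm{Lap}(1/\varepsilon)$; set $P_t(\mathbf{s})\propto P_{t-1}(\mathbf{s})\exp\big(s_{i(t)}(\mu_{i(t)}-w(P_{t-1},i(t)))/(2q)\big)$. Finally $P_{\mathrm{avg}}=\frac1T\sum_{t=1}^TP_t$ and the output of $\mathfrak{h}_2$ is $\sqrt{2/d}\,\frac1q(w(P_{\mathrm{avg}},1),\dots,w(P_{\mathrm{avg}},d))$. *)

theory Defs
  imports "HOL-Probability.Probability"
begin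

(* Grid S = {-1, -1+eta, ..., 1} (assuming 2/eta is a natural number). *)
definition grid :: "real \<Rightarrow> real set" where
  "grid \<eta> = (\<lambda>k::nat. -1 + real k * \<eta>) ` {0..nat \<lfloor>2 / \<eta>\<rfloor>}"

definition gridD :: "nat \<Rightarrow> real \<Rightarrow> (nat \<Rightarrow> real) set" where
  "gridD d \<eta> = PiE {..<d} (\<lambda>_. grid \<eta>)"

(* Distributions on S^d are represented by their probability mass functions. *)
type_synonym distr = "(nat \<Rightarrow> real) \<Rightarrow> real"

definition marginal :: "nat \<Rightarrow> real \<Rightarrow> distr \<Rightarrow> nat \<Rightarrow> real \<Rightarrow> real" where
  "marginal d \<eta> P i s = (\<Sum>x\<in>{x\<in>gridD d \<eta>. x i = s}. P x)"

definition wP :: "nat \<Rightarrow> nat \<Rightarrow> real \<Rightarrow> distr \<Rightarrow> nat \<Rightarrow> real" where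
  "wP d q \<eta> P i = real q * (\<Sum>s\<in>grid \<eta>. s * marginal d \<eta> P i s)"

definition wD :: "nat \<Rightarrow> (nat \<Rightarrow> nat \<Rightarrow> real) \<Rightarrow> nat \<Rightarrow> real" where
  "wD q v i = (\<Sum>j<q. v j i)"

definition wDQ :: "nat \<Rightarrow> (nat \<times> nat \<Rightarrow> real) \<Rightarrow> nat \<Rightarrow> real" where
  "wDQ q DQ i = (\<Sum>j<q. DQ (j, i))"

definition quant :: "real \<Rightarrow> real \<Rightarrow> real pmf" where
  "quant \<eta> x = (let k = real_of_int \<lfloor>(x + 1) / \<eta>\<rfloor> in
     map_pmf (\<lambda>b. if b then -1 + (k + 1) * \<eta> else -1 + k * \<eta>)
       (bernoulli_pmf ((x + 1 - k * \<eta>) / \<eta>)))"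

definition quant_data :: "nat \<Rightarrow> nat \<Rightarrow> real \<Rightarrow> (nat \<Rightarrow> nat \<Rightarrow> real) \<Rightarrow> (nat \<times> nat \<Rightarrow> real) pmf" where
  "quant_data d q \<eta> v = Pi_pmf ({..<q} \<times> {..<d}) 0
     (\<lambda>(j, i). quant \<eta> (sqrt (real d / 2) * v j i))"

definition laplace :: "real \<Rightarrow> real measure" where
  "laplace \<epsilon> = density lborel (\<lambda>x. ennreal (\<epsilon> / 2 * exp (- \<epsilon> * \<bar>x\<bar>)))"

definition P0 :: "nat \<Rightarrow> real \<Rightarrow> distr" where
  "P0 d \<eta> = (\<lambda>s. if s \<in> gridD d \<eta> then 1 / real (card (gridD d \<eta>)) else 0)"

definition em_prob :: "nat \<Rightarrow> nat \<Rightarrow> real \<Rightarrow> real \<Rightarrow> (nat \<times> nat \<Rightarrow> real) \<Rightarrow> distr \<Rightarrow> nat \<Rightarrow> real" where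
  "em_prob d q \<eta> \<epsilon> DQ P i =
     exp (\<epsilon> * \<bar>wP d q \<eta> P i - wDQ q DQ i\<bar>) /
     (\<Sum>k<d. exp (\<epsilon> * \<bar>wP d q \<eta> P k - wDQ q DQ k\<bar>))"

definition upd :: "nat \<Rightarrow> nat \<Rightarrow> real \<Rightarrow> distr \<Rightarrow> nat \<Rightarrow> real \<Rightarrow> distr" where
  "upd d q \<eta> P i \<mu> =
     (let f = (\<lambda>s. P s * exp (s i * (\<mu> - wP d q \<eta> P i) / (2 * real q)))
      in (\<lambda>s. f s / (\<Sum>x\<in>gridD d \<eta>. f x)))"

(* Expected value of F(sum_{t} P_t) for the remaining n iterations, given the
   quantized data DQ, the current distribution P and the running sum Ps of
   previously produced P_t. *)
primrec h2_exp :: "nat \<Rightarrow> nat \<Rightarrow> real \<Rightarrow> real \<Rightarrow> (nat \<times> nat \<Rightarrow> real) \<Rightarrow> (distr \<Rightarrow> real)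
    \<Rightarrow> nat \<Rightarrow> distr \<Rightarrow> distr \<Rightarrow> real" where
  "h2_exp d q \<eta> \<epsilon> DQ F 0 P Ps = F Ps"
| "h2_exp d q \<eta> \<epsilon> DQ F (Suc n) P Ps =
     (\<Sum>i<d. em_prob d q \<eta> \<epsilon> DQ P i *
        (\<integral>z. (let P' = upd d q \<eta> P i (wDQ q DQ i + z)
               in h2_exp d q \<eta> \<epsilon> DQ F n P' (\<lambda>s. Ps s + P' s)) \<partial>laplace \<epsilon>))"

definition err :: "nat \<Rightarrow> nat \<Rightarrow> real \<Rightarrow> (nat \<Rightarrow> nat \<Rightarrow> real) \<Rightarrow> distr \<Rightarrow> real" where
  "err d q \<eta> v Pavg = Max ((\<lambda>i. \<bar>wD q v i / real q - sqrt (2 / real d) * (1 / real q) * wP d q \<eta> Pavg i\<bar>) ` {..<d})"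

definition h2_expected_error :: "nat \<Rightarrow> nat \<Rightarrow> real \<Rightarrow> real \<Rightarrow> nat \<Rightarrow> (nat \<Rightarrow> nat \<Rightarrow> real) \<Rightarrow> real" where
  "h2_expected_error d q \<eta> \<epsilon> T v =
     measure_pmf.expectation (quant_data d q \<eta> v)
       (\<lambda>DQ. h2_exp d q \<eta> \<epsilon> DQ (\<lambda>Ps. err d q \<eta> v (\<lambda>s. Ps s / real T)) T (P0 d \<eta>) (\<lambda>_. 0))"

end

theory Submission
  imports Defs
begin

text \<open>
  Fix the quantized data \<open>D\<^sub>Q\<close> and write \<open>e\<^sub>i(P)\<close> for the difference between the \<open>i\<close>-th data mean
  and the \<open>i\<close>-th mean of \<open>P\<close>.  The cross entropy \<open>\<Phi>(P) = -(1/q) \<Sum>\<^sub>j ln P(row\<^sub>j)\<close> of the data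
  rows is nonnegative and equals \<open>d ln |S|\<close> at the uniform start.  By Hoeffding's lemma, a
  multiplicative-weights step at \<open>i\<close> with noisy answer lowers \<open>\<Phi>\<close> by \<open>3/8 e\<^sub>i\<^sup>2\<close> up to noise terms
  whose Laplace expectation is \<open>1/(4 q\<^sup>2 \<epsilon>\<^sup>2)\<close>.  The exponential mechanism picks \<open>i\<close> with
  \<open>E|e\<^sub>i| \<ge> max\<^sub>i |e\<^sub>i| - ln d/(q \<epsilon>)\<close>, and AM-GM trades \<open>E|e\<^sub>i|\<close> for \<open>E e\<^sub>i\<^sup>2\<close>.  Hence
  the maximal error plus \<open>\<kappa> \<Phi>\<close> pays for itself round by round, so after \<open>T = d\<^sup>2\<close> rounds the
  error of \<open>P\<^sub>a\<^sub>v\<^sub>g\<close> is at most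
  \<open>(2 + \<kappa> d ln |S|) / T + ln d/(q \<epsilon>) + 2/(3 \<kappa>) + \<kappa>/(4 q\<^sup>2 \<epsilon>\<^sup>2)\<close>.  Choosing \<open>\<kappa>\<close> optimally and
  adding the quantization error, at most \<open>\<eta>\<close> per coordinate, gives the claim.
\<close>

lemma finite_grid: "finite (grid \<eta>)"
  unfolding grid_def by simp

lemma finite_gridD: "finite (gridD d \<eta>)"
  unfolding gridD_def by (intro finite_PiE) (auto simp: finite_grid)

lemma gridD_coord: "x \<in> gridD d \<eta> \<Longrightarrow> i < d \<Longrightarrow> x i \<in> grid \<eta>"
  unfolding gridD_def by auto

locale grid_params =
  fixes \<eta> :: real and N :: nat
  assumes eta_pos: "\<eta> > 0" and two_div_eta: "2 / \<eta> = real N"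
begin

lemma N_pos: "N \<ge> 1"
  using eta_pos two_div_eta by (cases N) auto

lemma N_mult_eta: "real N * \<eta> = 2"
  using eta_pos two_div_eta by (simp add: field_simps)

lemma grid_eq: "grid \<eta> = (\<lambda>k::nat. -1 + real k * \<eta>) ` {0..N}"
  using two_div_eta unfolding grid_def by simp

lemma grid_point: "k \<le> N \<Longrightarrow> -1 + real k * \<eta> \<in> grid \<eta>"
  unfolding grid_eq by auto

lemma grid_bounded:
  assumes "s \<in> grid \<eta>"
  shows "\<bar>s\<bar> \<le> 1"
proof -
  obtain k where k: "k \<le> N" "s = -1 + real k * \<eta>"
    using assms unfolding grid_eq by auto
  have "real k * \<eta> \<le> real N * \<eta>"
    using k eta_pos by (intro mult_right_mono) auto
  also have "real N * \<eta> = 2"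
    by (rule N_mult_eta)
  moreover have "0 \<le> real k * \<eta>"
    using eta_pos by simp
  ultimately show ?thesis
    using k by (simp add: abs_le_iff)
qed

lemma card_grid: "card (grid \<eta>) = N + 1"
proof -
  have "inj_on (\<lambda>k::nat. -1 + real k * \<eta>) {0..N}"
    using eta_pos by (auto simp: inj_on_def)
  then show ?thesis
    unfolding grid_eq by (simp add: card_image)
qed

lemma card_gridD: "card (gridD d \<eta>) = (N + 1) ^ d"
  unfolding gridD_def by (simp add: card_PiE card_grid)

lemma gridD_nonempty: "gridD d \<eta> \<noteq> {}"
  using card_gridD[of d] by auto

lemma quant_support:
  assumes x: "\<bar>x\<bar> \<le> 1" and y: "y \<in> set_pmf (quant \<eta> x)"
  shows "y \<in> grid \<eta> \<and> \<bar>y - x\<bar> \<le> \<eta>"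
proof -
  define r where "r = (x + 1) / \<eta>"
  define k where "k = \<lfloor>r\<rfloor>"
  have r_bounds: "0 \<le> r" "r \<le> real N"
    using x eta_pos N_mult_eta unfolding r_def by (auto simp: abs_le_iff divide_le_eq)
  have k: "0 \<le> k" "real_of_int k \<le> r" "r < real_of_int k + 1"
    using r_bounds unfolding k_def by linarith+
  have x_eq: "x = -1 + r * \<eta>"
    using eta_pos unfolding r_def by (simp add: field_simps)
  have "quant \<eta> x = map_pmf (\<lambda>b. if b then -1 + (real_of_int k + 1) * \<eta> else -1 + real_of_int k * \<eta>)
      (bernoulli_pmf (r - real_of_int k))"
    using eta_pos unfolding quant_def Let_def k_def r_def by (simp add: diff_divide_distrib)
  then obtain b where b: "b \<in> set_pmf (bernoulli_pmf (r - real_of_int k))"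
    and y_eq: "y = (if b then -1 + (real_of_int k + 1) * \<eta> else -1 + real_of_int k * \<eta>)"
    using y by auto
  show ?thesis
  proof (cases b)
    case True
    \<comment> \<open>the upper neighbour is drawn with probability \<open>r - k\<close>, which vanishes when \<open>r = k = N\<close>\<close>
    then have "r \<noteq> real_of_int k"
      using b by (auto simp: set_pmf_eq)
    then have "nat (k + 1) \<le> N"
      using k r_bounds by linarith
    then have "y \<in> grid \<eta>"
      using grid_point[of "nat (k + 1)"] True y_eq k by (simp add: add.commute)
    moreover have "y - x = (real_of_int k + 1 - r) * \<eta>"
      using True y_eq x_eq by (simp add: algebra_simps)
    ultimately show ?thesis
      using k eta_pos by (auto simp: abs_mult intro: mult_left_le_one_le)
  next
    case False
    have "nat k \<le> N"
      using k r_bounds by linarith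
    then have "y \<in> grid \<eta>"
      using grid_point[of "nat k"] False y_eq k by simp
    moreover have "y - x = (real_of_int k - r) * \<eta>"
      using False y_eq x_eq by (simp add: algebra_simps)
    ultimately show ?thesis
      using k eta_pos by (auto simp: abs_mult intro: mult_left_le_one_le)
  qed
qed

lemma quant_data_approx:
  assumes DQ: "DQ \<in> set_pmf (quant_data d q \<eta> v)" and v: "\<forall>j<q. \<forall>i<d. \<bar>v j i\<bar> \<le> sqrt (2 / real d)"
    and "j < q" "i < d"
  shows "DQ (j, i) \<in> grid \<eta> \<and> \<bar>DQ (j, i) - sqrt (real d / 2) * v j i\<bar> \<le> \<eta>"
proof (rule quant_support)
  have "\<bar>sqrt (real d / 2) * v j i\<bar> \<le> sqrt (real d / 2) * sqrt (2 / real d)"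
    using v assms(3,4) by (simp add: abs_mult mult_left_mono)
  also have "\<dots> = 1"
    using assms(4) by (simp flip: real_sqrt_mult)
  finally show "\<bar>sqrt (real d / 2) * v j i\<bar> \<le> 1" .
  show "DQ (j, i) \<in> set_pmf (quant \<eta> (sqrt (real d / 2) * v j i))"
    using set_Pi_pmf_subset'[of "{..<q} \<times> {..<d}" 0 "\<lambda>(j, i). quant \<eta> (sqrt (real d / 2) * v j i)"]
      DQ assms(3,4) unfolding quant_data_def PiE_dflt_def by auto
qed

end

lemma exp_le_chord:
  fixes l s :: real
  assumes "\<bar>s\<bar> \<le> 1"
  shows "exp (l * s) \<le> (1 + s) / 2 * exp l + (1 - s) / 2 * exp (- l)"
proof -
  have "exp ((1 - (1 - s) / 2) *\<^sub>R l + ((1 - s) / 2) *\<^sub>R (- l))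
      \<le> (1 - (1 - s) / 2) * exp l + (1 - s) / 2 * exp (- l)"
    using assms by (intro convex_onD[OF exp_convex]) auto
  then show ?thesis
    by (simp add: algebra_simps diff_divide_distrib add_divide_distrib)
qed

lemma two_point_mgf_le:
  fixes l m :: real
  assumes "\<bar>m\<bar> \<le> 1"
  shows "(1 + m) / 2 * exp l + (1 - m) / 2 * exp (- l) \<le> exp (l * m + l\<^sup>2 / 2)"
proof -
  have nonneg_case: "(1 + m) / 2 * exp l + (1 - m) / 2 * exp (- l) \<le> exp (l * m + l\<^sup>2 / 2)"
    if "l \<ge> 0" "\<bar>m\<bar> \<le> 1" for l m :: real
  proof -
    define p where "p = (1 + m) / 2"
    have p: "0 \<le> p" "1 + p * (exp (2 * l) - 1) > 0"
      using that unfolding p_def by (auto intro!: add_pos_nonneg)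
    have "- (2 * l) * p + ln (1 + p * (exp (2 * l) - 1)) \<le> (2 * l)\<^sup>2 / 8"
      using Hoeffdings_lemma_aux[of "2 * l" p] that p by simp
    moreover have "(2 * l) * p = l * m + l" "(2 * l)\<^sup>2 / 8 = l\<^sup>2 / 2"
      unfolding p_def by (simp_all add: algebra_simps power2_eq_square)
    ultimately have "ln (1 + p * (exp (2 * l) - 1)) \<le> l * m + l + l\<^sup>2 / 2"
      by linarith
    then have "1 + p * (exp (2 * l) - 1) \<le> exp (l * m + l + l\<^sup>2 / 2)"
      using p by (metis exp_le_cancel_iff exp_ln)
    then have "exp (- l) * (1 + p * (exp (2 * l) - 1)) \<le> exp (- l) * exp (l * m + l + l\<^sup>2 / 2)"
      by simp
    moreover have "exp (- l) * (1 + p * (exp (2 * l) - 1)) = (1 + m) / 2 * exp l + (1 - m) / 2 * exp (- l)"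
      unfolding p_def by (simp add: algebra_simps diff_divide_distrib add_divide_distrib
          flip: exp_add)
    ultimately show ?thesis
      by (simp flip: exp_add)
  qed
  show ?thesis
  proof (cases "l \<ge> 0")
    case True
    then show ?thesis using nonneg_case assms by blast
  next
    case False
    then show ?thesis using nonneg_case[of "- l" "- m"] assms by (simp add: algebra_simps)
  qed
qed

lemma Hoeffdings_lemma_weighted_sum:
  fixes w s :: "'a \<Rightarrow> real"
  assumes "finite A" "\<And>x. x \<in> A \<Longrightarrow> 0 \<le> w x" "(\<Sum>x\<in>A. w x) = 1"
    and "\<And>x. x \<in> A \<Longrightarrow> \<bar>s x\<bar> \<le> 1"
  shows "(\<Sum>x\<in>A. w x * exp (l * s x)) \<le> exp (l * (\<Sum>x\<in>A. w x * s x) + l\<^sup>2 / 2)"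
proof -
  define m where "m = (\<Sum>x\<in>A. w x * s x)"
  have "\<bar>m\<bar> \<le> (\<Sum>x\<in>A. w x * \<bar>s x\<bar>)"
    unfolding m_def using assms(2) by (auto intro: order_trans[OF sum_abs] simp: abs_mult)
  also have "\<dots> \<le> (\<Sum>x\<in>A. w x)"
    using assms(2,4) by (intro sum_mono) (simp add: mult_left_le)
  finally have m: "\<bar>m\<bar> \<le> 1"
    using assms(3) by simp
  have "(\<Sum>x\<in>A. w x * exp (l * s x))
      \<le> (\<Sum>x\<in>A. w x * ((1 + s x) / 2 * exp l + (1 - s x) / 2 * exp (- l)))"
    using assms(2,4) by (intro sum_mono mult_left_mono exp_le_chord) auto
  also have "\<dots> = (\<Sum>x\<in>A. (exp l + exp (- l)) / 2 * w x + (exp l - exp (- l)) / 2 * (w x * s x))"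
    by (intro sum.cong) (simp_all add: field_simps)
  also have "\<dots> = (exp l + exp (- l)) / 2 + (exp l - exp (- l)) / 2 * m"
    unfolding m_def sum.distrib sum_distrib_left[symmetric] assms(3) by simp
  also have "\<dots> = (1 + m) / 2 * exp l + (1 - m) / 2 * exp (- l)"
    by (simp add: field_simps)
  also have "\<dots> \<le> exp (l * m + l\<^sup>2 / 2)"
    using m by (rule two_point_mgf_le)
  finally show ?thesis
    unfolding m_def .
qed

text \<open>Strict positivity keeps the logarithms in \<open>cross_entropy\<close> finite.\<close>

definition grid_distr :: "nat \<Rightarrow> real \<Rightarrow> distr \<Rightarrow> bool" where
  "grid_distr d \<eta> P \<longleftrightarrow> (\<forall>x\<in>gridD d \<eta>. 0 < P x) \<and> (\<Sum>x\<in>gridD d \<eta>. P x) = 1"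

definition coord_mean :: "nat \<Rightarrow> real \<Rightarrow> distr \<Rightarrow> nat \<Rightarrow> real" where
  "coord_mean d \<eta> P i = (\<Sum>x\<in>gridD d \<eta>. P x * x i)"

definition mw_normalizer :: "nat \<Rightarrow> real \<Rightarrow> distr \<Rightarrow> nat \<Rightarrow> real \<Rightarrow> real" where
  "mw_normalizer d \<eta> P i l = (\<Sum>x\<in>gridD d \<eta>. P x * exp (l * x i))"

lemma wP_eq_coord_mean:
  assumes "i < d"
  shows "wP d q \<eta> P i = real q * coord_mean d \<eta> P i"
proof -
  have "(\<Sum>s\<in>grid \<eta>. s * marginal d \<eta> P i s)
      = (\<Sum>s\<in>grid \<eta>. \<Sum>x\<in>{x\<in>gridD d \<eta>. x i = s}. P x * x i)"
    unfolding marginal_def by (auto simp: sum_distrib_left mult.commute intro: sum.cong)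
  also have "\<dots> = (\<Sum>x\<in>gridD d \<eta>. P x * x i)"
    using gridD_coord[OF _ assms] by (intro sum.group finite_gridD finite_grid) auto
  finally show ?thesis
    unfolding wP_def coord_mean_def by simp
qed

lemma coord_mean_add: "coord_mean d \<eta> (\<lambda>s. P s + P' s) i = coord_mean d \<eta> P i + coord_mean d \<eta> P' i"
  unfolding coord_mean_def by (simp add: distrib_right sum.distrib)

lemma coord_mean_divide: "coord_mean d \<eta> (\<lambda>s. P s / c) i = coord_mean d \<eta> P i / c"
  unfolding coord_mean_def by (simp add: sum_divide_distrib)

lemma grid_distr_le_1:
  assumes "grid_distr d \<eta> P" "x \<in> gridD d \<eta>"
  shows "P x \<le> 1"
proof -
  have "P x \<le> (\<Sum>y\<in>gridD d \<eta>. P y)"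
    using assms unfolding grid_distr_def by (intro member_le_sum finite_gridD) auto
  then show ?thesis
    using assms unfolding grid_distr_def by simp
qed

lemma upd_eq_mw_normalizer:
  "upd d q \<eta> P i \<mu> = (\<lambda>s. P s * exp ((\<mu> - wP d q \<eta> P i) / (2 * real q) * s i) /
     mw_normalizer d \<eta> P i ((\<mu> - wP d q \<eta> P i) / (2 * real q)))"
  unfolding upd_def mw_normalizer_def Let_def by (simp add: mult.commute)

context grid_params
begin

lemma grid_distr_P0: "grid_distr d \<eta> (P0 d \<eta>)"
proof -
  have "card (gridD d \<eta>) > 0"
    using gridD_nonempty finite_gridD card_gt_0_iff by blast
  then show ?thesis
    unfolding grid_distr_def P0_def by simp
qed

lemma abs_coord_mean_le_1:
  assumes "grid_distr d \<eta> P" "i < d"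
  shows "\<bar>coord_mean d \<eta> P i\<bar> \<le> 1"
proof -
  have "\<bar>coord_mean d \<eta> P i\<bar> \<le> (\<Sum>x\<in>gridD d \<eta>. \<bar>P x * x i\<bar>)"
    unfolding coord_mean_def by (rule sum_abs)
  also have "\<dots> \<le> (\<Sum>x\<in>gridD d \<eta>. P x)"
    using assms grid_bounded[OF gridD_coord]
    by (intro sum_mono) (auto simp: grid_distr_def abs_mult mult_left_le)
  finally show ?thesis
    using assms unfolding grid_distr_def by simp
qed

lemma mw_normalizer_pos: "grid_distr d \<eta> P \<Longrightarrow> mw_normalizer d \<eta> P i l > 0"
  unfolding mw_normalizer_def grid_distr_def by (intro sum_pos finite_gridD gridD_nonempty) auto

lemma grid_distr_upd:
  assumes "grid_distr d \<eta> P"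
  shows "grid_distr d \<eta> (upd d q \<eta> P i \<mu>)"
proof -
  define l where "l = (\<mu> - wP d q \<eta> P i) / (2 * real q)"
  have "mw_normalizer d \<eta> P i l > 0"
    using assms by (rule mw_normalizer_pos)
  then show ?thesis
    using assms unfolding grid_distr_def upd_eq_mw_normalizer l_def[symmetric]
    by (simp add: mw_normalizer_def flip: sum_divide_distrib)
qed

lemma ln_mw_normalizer_le:
  assumes "grid_distr d \<eta> P" "i < d"
  shows "ln (mw_normalizer d \<eta> P i l) \<le> l * coord_mean d \<eta> P i + l\<^sup>2 / 2"
proof -
  have "mw_normalizer d \<eta> P i l \<le> exp (l * coord_mean d \<eta> P i + l\<^sup>2 / 2)"
    unfolding mw_normalizer_def coord_mean_def
    using assms grid_bounded[OF gridD_coord]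
    by (intro Hoeffdings_lemma_weighted_sum finite_gridD) (auto simp: grid_distr_def less_imp_le)
  then show ?thesis
    using mw_normalizer_pos[OF assms(1)] by (metis exp_gt_zero ln_exp ln_le_cancel_iff)
qed

end

lemma softmax_mean_ge_Max:
  fixes u :: "'a \<Rightarrow> real"
  assumes I: "finite I" "I \<noteq> {}" and \<epsilon>: "\<epsilon> > 0"
  shows "(\<Sum>i\<in>I. exp (\<epsilon> * u i) / (\<Sum>k\<in>I. exp (\<epsilon> * u k)) * u i) \<ge> Max (u ` I) - ln (card I) / \<epsilon>"
proof -
  define Z where "Z = (\<Sum>k\<in>I. exp (\<epsilon> * u k))"
  define p where "p i = exp (\<epsilon> * u i) / Z" for i
  define n where "n = real (card I)"
  have Z: "Z > 0"
    unfolding Z_def using I by (intro sum_pos) auto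
  have n: "n > 0"
    unfolding n_def using I by (simp add: card_gt_0_iff)
  have p: "p i > 0" for i
    unfolding p_def using Z by simp
  have sum_p: "(\<Sum>i\<in>I. p i) = 1"
    unfolding p_def using Z by (simp add: Z_def flip: sum_divide_distrib)
  have "Max (u ` I) \<in> u ` I"
    using I by (intro Max_in) auto
  then obtain i0 where i0: "i0 \<in> I" "u i0 = Max (u ` I)"
    by auto
  have "exp (\<epsilon> * u i0) \<le> Z"
    unfolding Z_def using I i0 by (intro member_le_sum) auto
  then have ln_Z: "\<epsilon> * u i0 \<le> ln Z"
    using Z by (metis exp_gt_zero ln_exp ln_le_cancel_iff)
  \<comment> \<open>Gibbs' inequality against the uniform distribution on \<open>I\<close>\<close>
  have "(\<Sum>i\<in>I. p i * ln (1 / (n * p i))) \<le> (\<Sum>i\<in>I. p i * (1 / (n * p i) - 1))"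
    using p n by (intro sum_mono mult_left_mono ln_le_minus_one) (auto simp: less_imp_le)
  also have "\<dots> = (\<Sum>i\<in>I. 1 / n - p i)"
    using p n by (intro sum.cong) (simp_all add: field_simps less_imp_neq[symmetric])
  also have "\<dots> = 0"
    using sum_p n by (simp add: sum_subtractf n_def)
  finally have gibbs: "(\<Sum>i\<in>I. p i * ln (1 / (n * p i))) \<le> 0" .
  have "(\<Sum>i\<in>I. p i * ln (1 / (n * p i))) = (\<Sum>i\<in>I. p i * (ln Z - ln n) - \<epsilon> * (p i * u i))"
    using p n Z by (intro sum.cong) (auto simp: ln_div ln_mult p_def field_simps)
  also have "\<dots> = ln Z - ln n - \<epsilon> * (\<Sum>i\<in>I. p i * u i)"
    using sum_p by (simp add: sum_subtractf flip: sum_distrib_left sum_distrib_right)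
  finally have "ln Z - ln n \<le> \<epsilon> * (\<Sum>i\<in>I. p i * u i)"
    using gibbs by linarith
  then have "\<epsilon> * (u i0 - ln n / \<epsilon>) \<le> \<epsilon> * (\<Sum>i\<in>I. p i * u i)"
    using ln_Z \<epsilon> by (simp add: algebra_simps)
  then show ?thesis
    using \<epsilon> i0 unfolding p_def Z_def n_def by simp
qed

lemma (in prob_space) integral_le_affine_majorant:
  fixes f B :: "'a \<Rightarrow> real"
  assumes B: "integrable M B"
    and le: "\<And>x. x \<in> space M \<Longrightarrow> f x \<le> a + c * B x"
    and nonneg: "\<And>x. x \<in> space M \<Longrightarrow> 0 \<le> a + c * B x"
  shows "integral\<^sup>L M f \<le> a + c * integral\<^sup>L M B"
proof -
  have "integral\<^sup>L M f \<le> integral\<^sup>L M (\<lambda>x. a + c * B x)"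
  proof (cases "integrable M f")
    case True
    then show ?thesis using B le by (intro integral_mono) auto
  next
    case False
    \<comment> \<open>a non-integrable \<open>f\<close> has Bochner integral \<open>0\<close>\<close>
    then show ?thesis using nonneg by (simp add: not_integrable_integral_eq integral_nonneg)
  qed
  also have "\<dots> = a + c * integral\<^sup>L M B"
    using B by (simp add: prob_space)
  finally show ?thesis .
qed

lemma pmf_expectation_le_const:
  fixes f :: "'a \<Rightarrow> real"
  assumes "\<And>x. x \<in> set_pmf p \<Longrightarrow> f x \<le> C" "0 \<le> C"
  shows "measure_pmf.expectation p f \<le> C"
proof (cases "integrable (measure_pmf p) f")
  case True
  then show ?thesis using assms by (intro measure_pmf.integral_le_const) (auto simp: AE_measure_pmf_iff)
next
  case False
  then show ?thesis using assms by (simp add: not_integrable_integral_eq)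
qed

definition laplace_density :: "real \<Rightarrow> real \<Rightarrow> real" where
  "laplace_density \<epsilon> x = \<epsilon> / 2 * exp (- \<epsilon> * \<bar>x\<bar>)"

lemma laplace_density_measurable [measurable]: "laplace_density \<epsilon> \<in> borel_measurable borel"
  unfolding laplace_density_def by measurable

lemma laplace_eq_density: "laplace \<epsilon> = density lborel (\<lambda>x. ennreal (laplace_density \<epsilon> x))"
  unfolding laplace_def laplace_density_def by simp

text \<open>The Laplace density is the even extension of half the Erlang density of order \<open>0\<close>,
  so its absolute moments are those of the exponential distribution.\<close>

lemma nn_integral_laplace_abs_power:
  assumes \<epsilon>: "\<epsilon> > 0"
  shows "(\<integral>\<^sup>+x. ennreal (laplace_density \<epsilon> x * \<bar>x\<bar> ^ k) \<partial>lborel) = ennreal (fact k / \<epsilon> ^ k)"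
proof -
  define F where "F = fact k / \<epsilon> ^ k"
  define e where "e x = erlang_density 0 \<epsilon> x * x ^ k" for x
  have F: "0 \<le> F"
    unfolding F_def using \<epsilon> by simp
  have e_nonneg: "0 \<le> e x" for x
    unfolding e_def erlang_density_def using \<epsilon> by auto
  have [measurable]: "e \<in> borel_measurable borel"
    unfolding e_def by measurable
  have pos: "(\<integral>\<^sup>+x. ennreal (e x) \<partial>lborel) = ennreal F"
    using nn_integral_erlang_ith_moment[OF \<epsilon>, of 0 k] unfolding e_def F_def by simp
  have "(\<integral>\<^sup>+x. ennreal (e x) \<partial>lborel) = (\<integral>\<^sup>+x. ennreal (e (0 + (-1) * x)) \<partial>lborel)"
    using nn_integral_real_affine[of "\<lambda>x. ennreal (e x)" "-1" 0] by simp
  then have neg: "(\<integral>\<^sup>+x. ennreal (e (- x)) \<partial>lborel) = ennreal F"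
    using pos by simp
  have even: "laplace_density \<epsilon> x * \<bar>x\<bar> ^ k = (e x + e (- x)) * (1 / 2)" if "x \<noteq> 0" for x
    using that unfolding e_def erlang_density_def laplace_density_def
    by (cases "x < 0") (auto simp: abs_if)
  have "ennreal (laplace_density \<epsilon> x * \<bar>x\<bar> ^ k) = (ennreal (e x) + ennreal (e (- x))) * ennreal (1 / 2)"
    if "x \<noteq> 0" for x
    using e_nonneg[of x] e_nonneg[of "- x"]
    by (simp only: even[OF that] ennreal_mult[of "e x + e (- x)" "1 / 2"] ennreal_plus[of "e x" "e (- x)"])
  then have "(\<integral>\<^sup>+x. ennreal (laplace_density \<epsilon> x * \<bar>x\<bar> ^ k) \<partial>lborel)
      = (\<integral>\<^sup>+x. (ennreal (e x) + ennreal (e (- x))) * ennreal (1 / 2) \<partial>lborel)"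
    by (intro nn_integral_cong_AE eventually_mono[OF AE_lborel_singleton[of 0]]) auto
  also have "\<dots> = (ennreal F + ennreal F) * ennreal (1 / 2)"
    by (simp add: nn_integral_multc nn_integral_add pos neg)
  also have "\<dots> = ennreal ((F + F) * (1 / 2))"
    using F by (simp only: ennreal_plus[of F F, symmetric] ennreal_mult[of "F + F" "1 / 2", symmetric])
  finally show ?thesis
    unfolding F_def by simp
qed

lemma has_bochner_integral_laplace_abs_power:
  assumes "\<epsilon> > 0"
  shows "has_bochner_integral lborel (\<lambda>x. laplace_density \<epsilon> x * \<bar>x\<bar> ^ k) (fact k / \<epsilon> ^ k)"
  using assms nn_integral_laplace_abs_power[OF assms]
  by (intro has_bochner_integral_nn_integral) (auto simp: laplace_density_def)

lemma prob_space_laplace: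
  assumes "\<epsilon> > 0"
  shows "prob_space (laplace \<epsilon>)"
  using nn_integral_laplace_abs_power[OF assms, of 0]
  by (intro prob_spaceI) (simp add: laplace_eq_density emeasure_density)

lemma
  assumes \<epsilon>: "\<epsilon> > 0"
  shows integrable_laplace_quadratic: "integrable (laplace \<epsilon>) (\<lambda>z. c0 + c1 * z + c2 * z\<^sup>2)"
    and integral_laplace_quadratic: "(\<integral>z. c0 + c1 * z + c2 * z\<^sup>2 \<partial>laplace \<epsilon>) = c0 + c2 * (2 / \<epsilon>\<^sup>2)"
proof -
  have "integrable lborel (\<lambda>x. \<bar>laplace_density \<epsilon> x * x\<bar>)"
    using has_bochner_integral_laplace_abs_power[OF \<epsilon>, of 1] \<epsilon>
    by (simp add: abs_mult laplace_density_def integrable.intros)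
  then have "integrable lborel (\<lambda>x. laplace_density \<epsilon> x * x)"
    by (subst (asm) integrable_abs_iff) auto
  moreover have "(\<integral>x. laplace_density \<epsilon> x * x \<partial>lborel)
      = \<bar>-1\<bar> *\<^sub>R (\<integral>x. laplace_density \<epsilon> (0 + (-1) * x) * (0 + (-1) * x) \<partial>lborel)"
    by (rule lborel_integral_real_affine) simp
  ultimately have first: "has_bochner_integral lborel (\<lambda>x. laplace_density \<epsilon> x * x) 0"
    by (simp add: has_bochner_integral_iff laplace_density_def)
  have "has_bochner_integral lborel
      (\<lambda>x. c0 * laplace_density \<epsilon> x + c1 * (laplace_density \<epsilon> x * x) + c2 * (laplace_density \<epsilon> x * \<bar>x\<bar> ^ 2))
      (c0 * 1 + c1 * 0 + c2 * (2 / \<epsilon>\<^sup>2))"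
    using has_bochner_integral_laplace_abs_power[OF \<epsilon>, of 0] first
      has_bochner_integral_laplace_abs_power[OF \<epsilon>, of 2]
    by (intro has_bochner_integral_add has_bochner_integral_mult_right) (simp_all add: eval_nat_numeral)
  then have "has_bochner_integral lborel (\<lambda>x. laplace_density \<epsilon> x *\<^sub>R (c0 + c1 * x + c2 * x\<^sup>2))
      (c0 + c2 * (2 / \<epsilon>\<^sup>2))"
    by (simp add: algebra_simps)
  moreover have "AE x in lborel. 0 \<le> laplace_density \<epsilon> x"
    using \<epsilon> by (simp add: laplace_density_def)
  ultimately show "integrable (laplace \<epsilon>) (\<lambda>z. c0 + c1 * z + c2 * z\<^sup>2)"
    and "(\<integral>z. c0 + c1 * z + c2 * z\<^sup>2 \<partial>laplace \<epsilon>) = c0 + c2 * (2 / \<epsilon>\<^sup>2)"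
    unfolding laplace_eq_density
    by (auto simp: integrable_density integral_density has_bochner_integral_iff)
qed

definition data_mean :: "nat \<Rightarrow> (nat \<times> nat \<Rightarrow> real) \<Rightarrow> nat \<Rightarrow> real" where
  "data_mean q DQ i = wDQ q DQ i / real q"

definition gap :: "nat \<Rightarrow> nat \<Rightarrow> real \<Rightarrow> (nat \<times> nat \<Rightarrow> real) \<Rightarrow> real \<Rightarrow> distr \<Rightarrow> real" where
  "gap d q \<eta> DQ k Ps = Max ((\<lambda>i. \<bar>k * data_mean q DQ i - coord_mean d \<eta> Ps i\<bar>) ` {..<d})"

definition data_row :: "nat \<Rightarrow> (nat \<times> nat \<Rightarrow> real) \<Rightarrow> nat \<Rightarrow> nat \<Rightarrow> real" where
  "data_row d DQ j = (\<lambda>i. if i < d then DQ (j, i) else undefined)"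

definition cross_entropy :: "nat \<Rightarrow> nat \<Rightarrow> (nat \<times> nat \<Rightarrow> real) \<Rightarrow> distr \<Rightarrow> real" where
  "cross_entropy d q DQ P = - (\<Sum>j<q. ln (P (data_row d DQ j))) / real q"

lemma em_prob_nonneg: "em_prob d q \<eta> \<epsilon> DQ P i \<ge> 0"
  unfolding em_prob_def by (intro divide_nonneg_nonneg sum_nonneg) auto

lemma sum_em_prob: "d \<ge> 1 \<Longrightarrow> (\<Sum>i<d. em_prob d q \<eta> \<epsilon> DQ P i) = 1"
  unfolding em_prob_def
  by (subst sum_divide_distrib[symmetric], rule divide_self, rule less_imp_neq[symmetric], rule sum_pos)
     (auto simp: lessThan_empty_iff)

lemma sum_em_prob_affine:
  assumes "d \<ge> 1"
  shows "(\<Sum>i<d. em_prob d q \<eta> \<epsilon> DQ P i * (a + b * f i))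
    = a + b * (\<Sum>i<d. em_prob d q \<eta> \<epsilon> DQ P i * f i)"
proof -
  have "em_prob d q \<eta> \<epsilon> DQ P i * (a + b * f i)
      = a * em_prob d q \<eta> \<epsilon> DQ P i + b * (em_prob d q \<eta> \<epsilon> DQ P i * f i)" for i
    by (simp add: algebra_simps)
  then show ?thesis
    by (simp add: sum.distrib sum_em_prob[OF assms] flip: sum_distrib_left)
qed

locale mw_run = grid_params +
  fixes d q :: nat and \<epsilon> :: real and DQ :: "nat \<times> nat \<Rightarrow> real"
  assumes d_pos: "d \<ge> 1" and q_pos: "q \<ge> 1" and eps_pos: "\<epsilon> > 0"
    and DQ_grid: "\<And>j i. j < q \<Longrightarrow> i < d \<Longrightarrow> DQ (j, i) \<in> grid \<eta>"
begin

lemma coords_nonempty: "{..<d} \<noteq> {}"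
  using d_pos by (simp add: lessThan_empty_iff)

lemma data_row_in_gridD: "j < q \<Longrightarrow> data_row d DQ j \<in> gridD d \<eta>"
  unfolding data_row_def gridD_def by (intro PiE_I) (auto intro: DQ_grid)

lemma abs_data_mean_le_1:
  assumes "i < d"
  shows "\<bar>data_mean q DQ i\<bar> \<le> 1"
proof -
  have "\<bar>wDQ q DQ i\<bar> \<le> (\<Sum>j<q. \<bar>DQ (j, i)\<bar>)"
    unfolding wDQ_def by (rule sum_abs)
  also have "\<dots> \<le> real q"
    using sum_mono[of "{..<q}" "\<lambda>j. \<bar>DQ (j, i)\<bar>" "\<lambda>_. 1"] assms grid_bounded DQ_grid by simp
  finally show ?thesis
    using q_pos unfolding data_mean_def by (simp add: abs_div)
qed

lemma gap_ge: "i < d \<Longrightarrow> \<bar>k * data_mean q DQ i - coord_mean d \<eta> Ps i\<bar> \<le> gap d q \<eta> DQ k Ps"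
  unfolding gap_def by (intro Max_ge) auto

lemma gap_nonneg: "0 \<le> gap d q \<eta> DQ k Ps"
  using gap_ge[of 0 k Ps] d_pos by (simp add: order_trans[OF abs_ge_zero])

lemma gap_le:
  assumes "\<And>i. i < d \<Longrightarrow> \<bar>k * data_mean q DQ i - coord_mean d \<eta> Ps i\<bar> \<le> b"
  shows "gap d q \<eta> DQ k Ps \<le> b"
  unfolding gap_def using assms coords_nonempty by (subst Max_le_iff) auto

lemma gap_zero: "gap d q \<eta> DQ 0 (\<lambda>_. 0) = 0"
  using gap_nonneg gap_le[of 0 "\<lambda>_. 0" 0] by (simp add: coord_mean_def order_antisym)

lemma gap_one_le_2:
  assumes "grid_distr d \<eta> P"
  shows "gap d q \<eta> DQ 1 P \<le> 2"
proof (rule gap_le)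
  fix i
  assume i: "i < d"
  show "\<bar>1 * data_mean q DQ i - coord_mean d \<eta> P i\<bar> \<le> 2"
    using abs_data_mean_le_1[OF i] abs_coord_mean_le_1[OF assms i]
      abs_triangle_ineq4[of "data_mean q DQ i" "coord_mean d \<eta> P i"]
    by simp
qed

lemma gap_add_le:
  "gap d q \<eta> DQ (k + 1) (\<lambda>s. Ps s + P s) \<le> gap d q \<eta> DQ k Ps + gap d q \<eta> DQ 1 P"
proof (rule gap_le)
  fix i assume i: "i < d"
  have "(k + 1) * data_mean q DQ i - coord_mean d \<eta> (\<lambda>s. Ps s + P s) i
      = (k * data_mean q DQ i - coord_mean d \<eta> Ps i) + (1 * data_mean q DQ i - coord_mean d \<eta> P i)"
    by (simp add: coord_mean_add algebra_simps)
  then show "\<bar>(k + 1) * data_mean q DQ i - coord_mean d \<eta> (\<lambda>s. Ps s + P s) i\<bar>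
      \<le> gap d q \<eta> DQ k Ps + gap d q \<eta> DQ 1 P"
    using gap_ge[OF i, of k Ps] gap_ge[OF i, of 1 P] by linarith
qed

lemma cross_entropy_nonneg:
  assumes "grid_distr d \<eta> P"
  shows "cross_entropy d q DQ P \<ge> 0"
proof -
  have "(\<Sum>j<q. ln (P (data_row d DQ j))) \<le> 0"
    using assms data_row_in_gridD grid_distr_le_1
    by (intro sum_nonpos) (simp add: grid_distr_def)
  then show ?thesis
    unfolding cross_entropy_def by (simp add: divide_nonpos_nonneg)
qed

lemma cross_entropy_P0: "cross_entropy d q DQ (P0 d \<eta>) = real d * ln (real N + 1)"
proof -
  have "(\<Sum>j<q. ln (P0 d \<eta> (data_row d DQ j))) = (\<Sum>j<q. - (real d * ln (real N + 1)))"
    using data_row_in_gridD by (intro sum.cong) (simp_all add: P0_def card_gridD ln_div ln_realpow)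
  then show ?thesis
    using q_pos unfolding cross_entropy_def by simp
qed

lemma cross_entropy_upd:
  fixes \<mu> :: real
  assumes P: "grid_distr d \<eta> P" and i: "i < d"
  defines "l \<equiv> (\<mu> - wP d q \<eta> P i) / (2 * real q)"
  shows "cross_entropy d q DQ (upd d q \<eta> P i \<mu>)
    = cross_entropy d q DQ P - l * data_mean q DQ i + ln (mw_normalizer d \<eta> P i l)"
proof -
  define Z where "Z = mw_normalizer d \<eta> P i l"
  have Z: "Z > 0"
    unfolding Z_def using P by (rule mw_normalizer_pos)
  have "ln (upd d q \<eta> P i \<mu> (data_row d DQ j)) = ln (P (data_row d DQ j)) + l * DQ (j, i) - ln Z"
    if "j < q" for j
  proof -
    have "P (data_row d DQ j) > 0"
      using P data_row_in_gridD[OF that] unfolding grid_distr_def by blast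
    then show ?thesis
      using Z i by (simp add: upd_eq_mw_normalizer l_def[symmetric] Z_def[symmetric] ln_div ln_mult,
          simp add: data_row_def)
  qed
  then have "(\<Sum>j<q. ln (upd d q \<eta> P i \<mu> (data_row d DQ j)))
      = (\<Sum>j<q. ln (P (data_row d DQ j))) + l * wDQ q DQ i - real q * ln Z"
    by (simp add: wDQ_def sum.distrib sum_subtractf sum_distrib_left)
  then show ?thesis
    using q_pos unfolding cross_entropy_def data_mean_def Z_def by (simp add: field_simps)
qed

lemma cross_entropy_upd_le:
  assumes P: "grid_distr d \<eta> P" and i: "i < d"
  defines "e \<equiv> data_mean q DQ i - coord_mean d \<eta> P i"
  shows "cross_entropy d q DQ (upd d q \<eta> P i (wDQ q DQ i + z))
    \<le> cross_entropy d q DQ P - 3 / 8 * e\<^sup>2 - e * z / (4 * real q) + z\<^sup>2 / (8 * real q ^ 2)"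
proof -
  define l where "l = (wDQ q DQ i + z - wP d q \<eta> P i) / (2 * real q)"
  have q: "real q > 0"
    using q_pos by simp
  have l: "l = (e + z / real q) / 2"
    using q unfolding l_def e_def data_mean_def wP_eq_coord_mean[OF i] by (simp add: field_simps)
  have "cross_entropy d q DQ (upd d q \<eta> P i (wDQ q DQ i + z))
      = cross_entropy d q DQ P - l * data_mean q DQ i + ln (mw_normalizer d \<eta> P i l)"
    unfolding l_def by (rule cross_entropy_upd[OF P i])
  also have "\<dots> \<le> cross_entropy d q DQ P - l * data_mean q DQ i + (l * coord_mean d \<eta> P i + l\<^sup>2 / 2)"
    using ln_mw_normalizer_le[OF P i] by simp
  also have "\<dots> = cross_entropy d q DQ P - 3 / 8 * e\<^sup>2 - e * z / (4 * real q) + z\<^sup>2 / (8 * real q ^ 2)"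
    using q unfolding l e_def by (simp add: field_simps power2_eq_square)
  finally show ?thesis .
qed

lemma gap_le_em_mean:
  assumes P: "grid_distr d \<eta> P"
  shows "gap d q \<eta> DQ 1 P - ln (real d) / (real q * \<epsilon>)
    \<le> (\<Sum>i<d. em_prob d q \<eta> \<epsilon> DQ P i * \<bar>data_mean q DQ i - coord_mean d \<eta> P i\<bar>)"
proof -
  define u where "u i = real q * \<bar>data_mean q DQ i - coord_mean d \<eta> P i\<bar>" for i
  have q: "real q > 0"
    using q_pos by simp
  have "wP d q \<eta> P i - wDQ q DQ i = real q * (coord_mean d \<eta> P i - data_mean q DQ i)" if "i < d" for i
    using q unfolding data_mean_def wP_eq_coord_mean[OF that] by (simp add: field_simps)
  then have "\<bar>wP d q \<eta> P i - wDQ q DQ i\<bar> = u i" if "i < d" for i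
    using that unfolding u_def by (simp add: abs_mult abs_minus_commute)
  then have em: "em_prob d q \<eta> \<epsilon> DQ P i = exp (\<epsilon> * u i) / (\<Sum>k<d. exp (\<epsilon> * u k))" if "i < d" for i
    using that unfolding em_prob_def by (auto intro!: sum.cong)
  have "gap d q \<eta> DQ 1 P \<in> (\<lambda>i. \<bar>1 * data_mean q DQ i - coord_mean d \<eta> P i\<bar>) ` {..<d}"
    unfolding gap_def using coords_nonempty by (intro Max_in) auto
  then obtain i0 where i0: "i0 < d" "real q * gap d q \<eta> DQ 1 P = u i0"
    unfolding u_def by auto
  have "real q * gap d q \<eta> DQ 1 P - ln (real d) / \<epsilon> \<le> Max (u ` {..<d}) - ln (real d) / \<epsilon>"
    using i0 by (simp add: Max_ge)
  also have "\<dots> \<le> (\<Sum>i<d. exp (\<epsilon> * u i) / (\<Sum>k<d. exp (\<epsilon> * u k)) * u i)"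
    using softmax_mean_ge_Max[OF _ coords_nonempty eps_pos, of u] by simp
  also have "\<dots> = real q * (\<Sum>i<d. em_prob d q \<eta> \<epsilon> DQ P i * \<bar>data_mean q DQ i - coord_mean d \<eta> P i\<bar>)"
    by (simp add: em u_def sum_distrib_left algebra_simps)
  finally show ?thesis
    using q eps_pos by (simp add: field_simps)
qed

lemma h2_exp_Suc_le:
  fixes B :: "nat \<Rightarrow> real \<Rightarrow> real"
  assumes B: "\<And>i. i < d \<Longrightarrow> integrable (laplace \<epsilon>) (B i)"
    and le: "\<And>i z. i < d \<Longrightarrow> h2_exp d q \<eta> \<epsilon> DQ F n (upd d q \<eta> P i (wDQ q DQ i + z))
      (\<lambda>s. Ps s + upd d q \<eta> P i (wDQ q DQ i + z) s) \<le> a + c * B i z"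
    and nonneg: "\<And>i z. i < d \<Longrightarrow> 0 \<le> a + c * B i z"
  shows "h2_exp d q \<eta> \<epsilon> DQ F (Suc n) P Ps
    \<le> a + c * (\<Sum>i<d. em_prob d q \<eta> \<epsilon> DQ P i * (\<integral>z. B i z \<partial>laplace \<epsilon>))"
proof -
  interpret laplace: prob_space "laplace \<epsilon>"
    using eps_pos by (rule prob_space_laplace)
  have "h2_exp d q \<eta> \<epsilon> DQ F (Suc n) P Ps
      \<le> (\<Sum>i<d. em_prob d q \<eta> \<epsilon> DQ P i * (a + c * (\<integral>z. B i z \<partial>laplace \<epsilon>)))"
    unfolding h2_exp.simps Let_def
    by (intro sum_mono mult_left_mono laplace.integral_le_affine_majorant em_prob_nonneg B le nonneg) auto
  also have "\<dots> = a + c * (\<Sum>i<d. em_prob d q \<eta> \<epsilon> DQ P i * (\<integral>z. B i z \<partial>laplace \<epsilon>))"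
    by (rule sum_em_prob_affine[OF d_pos])
  finally show ?thesis .
qed

text \<open>The integrable majorant \<open>B\<close> is needed because \<open>h2_exp\<close> is not known to be integrable
  in the noise.\<close>

lemma h2_exp_le_potential:
  fixes F :: "distr \<Rightarrow> real" and \<rho> :: "nat \<Rightarrow> distr \<Rightarrow> real"
    and B :: "nat \<Rightarrow> distr \<Rightarrow> nat \<Rightarrow> real \<Rightarrow> real"
  assumes C: "0 \<le> C" "0 \<le> c"
    and F: "\<And>Ps. F Ps \<le> C + c * gap d q \<eta> DQ T Ps"
    and \<rho>_nonneg: "\<And>n P. grid_distr d \<eta> P \<Longrightarrow> 0 \<le> \<rho> n P"
    and B_ge: "\<And>n P i z. grid_distr d \<eta> P \<Longrightarrow> i < d \<Longrightarrow>
      gap d q \<eta> DQ 1 (upd d q \<eta> P i (wDQ q DQ i + z)) + \<rho> n (upd d q \<eta> P i (wDQ q DQ i + z))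
        \<le> B n P i z"
    and B_integrable: "\<And>n P i. grid_distr d \<eta> P \<Longrightarrow> i < d \<Longrightarrow> integrable (laplace \<epsilon>) (B n P i)"
    and \<rho>_step: "\<And>n P. grid_distr d \<eta> P \<Longrightarrow>
      (\<Sum>i<d. em_prob d q \<eta> \<epsilon> DQ P i * (\<integral>z. B n P i z \<partial>laplace \<epsilon>)) \<le> \<rho> (Suc n) P"
  shows "grid_distr d \<eta> P \<Longrightarrow>
    h2_exp d q \<eta> \<epsilon> DQ F n P Ps \<le> C + c * (gap d q \<eta> DQ (T - real n) Ps + \<rho> n P)"
proof (induction n arbitrary: P Ps)
  case 0
  have "c * gap d q \<eta> DQ T Ps \<le> c * (gap d q \<eta> DQ T Ps + \<rho> 0 P)"
    using \<rho>_nonneg[OF 0] C by (intro mult_left_mono) auto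
  then show ?case
    using F[of Ps] by simp
next
  case (Suc n)
  define X where "X = gap d q \<eta> DQ (T - real (Suc n)) Ps"
  have "h2_exp d q \<eta> \<epsilon> DQ F n P' (\<lambda>s. Ps s + P' s) \<le> (C + c * X) + c * B n P i z
    \<and> 0 \<le> (C + c * X) + c * B n P i z" if i: "i < d" and P': "P' = upd d q \<eta> P i (wDQ q DQ i + z)" for i z P'
  proof -
    have "grid_distr d \<eta> P'"
      unfolding P' using Suc.prems by (rule grid_distr_upd)
    moreover have "gap d q \<eta> DQ (T - real n) (\<lambda>s. Ps s + P' s) \<le> X + gap d q \<eta> DQ 1 P'"
      using gap_add_le[of "T - real (Suc n)" Ps P'] unfolding X_def by simp
    moreover have "0 \<le> X"
      unfolding X_def by (rule gap_nonneg)
    moreover have "gap d q \<eta> DQ 1 P' + \<rho> n P' \<le> B n P i z"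
      unfolding P' using B_ge[OF Suc.prems i] .
    ultimately show ?thesis
      using Suc.IH[of P' "\<lambda>s. Ps s + P' s"] \<rho>_nonneg[of P' n] gap_nonneg[of 1 P'] C
      by (smt (verit) distrib_left mult_left_mono mult_nonneg_nonneg)
  qed
  then have "h2_exp d q \<eta> \<epsilon> DQ F (Suc n) P Ps
      \<le> (C + c * X) + c * (\<Sum>i<d. em_prob d q \<eta> \<epsilon> DQ P i * (\<integral>z. B n P i z \<partial>laplace \<epsilon>))"
    using B_integrable[OF Suc.prems] by (intro h2_exp_Suc_le) auto
  also have "\<dots> \<le> C + c * X + c * \<rho> (Suc n) P"
    using \<rho>_step[OF Suc.prems] C by (simp add: mult_left_mono)
  finally show ?case
    unfolding X_def by (simp add: distrib_left)
qed

lemma h2_exp_le_trivial: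
  fixes F :: "distr \<Rightarrow> real"
  assumes C: "0 \<le> C" "0 \<le> c"
    and F: "\<And>Ps. F Ps \<le> C + c * gap d q \<eta> DQ T Ps"
    and P: "grid_distr d \<eta> P"
  shows "h2_exp d q \<eta> \<epsilon> DQ F n P Ps \<le> C + c * (gap d q \<eta> DQ (T - real n) Ps + 2 * real n)"
proof -
  interpret laplace: prob_space "laplace \<epsilon>"
    using eps_pos by (rule prob_space_laplace)
  show ?thesis
  proof (rule h2_exp_le_potential[OF C F, where \<rho> = "\<lambda>n P. 2 * real n" and B = "\<lambda>n P i z. 2 * real n + 2"])
    fix n P i z
    assume "grid_distr d \<eta> P"
    then show "gap d q \<eta> DQ 1 (upd d q \<eta> P i (wDQ q DQ i + z)) + 2 * real n \<le> 2 * real n + 2"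
      using gap_one_le_2 grid_distr_upd by simp
  qed (use P sum_em_prob[OF d_pos] in \<open>simp_all add: laplace.prob_space flip: sum_distrib_right\<close>)
qed

lemma abs_le_square_plus:
  fixes t \<kappa> :: real
  assumes "\<kappa> > 0"
  shows "\<bar>t\<bar> \<le> 3 * \<kappa> / 8 * t\<^sup>2 + 2 / (3 * \<kappa>)"
proof -
  have "0 \<le> 3 * \<kappa> / 8 * (\<bar>t\<bar> - 4 / (3 * \<kappa>))\<^sup>2"
    using assms by simp
  also have "\<dots> = 3 * \<kappa> / 8 * t\<^sup>2 - \<bar>t\<bar> + 2 / (3 * \<kappa>)"
    using assms by (simp add: power2_eq_square field_simps)
  finally show ?thesis
    by simp
qed

lemma gap_le_em_mean_square:
  assumes P: "grid_distr d \<eta> P" and \<kappa>: "\<kappa> > 0"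
  shows "gap d q \<eta> DQ 1 P \<le> ln (real d) / (real q * \<epsilon>) + 2 / (3 * \<kappa>)
    + 3 * \<kappa> / 8 * (\<Sum>i<d. em_prob d q \<eta> \<epsilon> DQ P i * (data_mean q DQ i - coord_mean d \<eta> P i)\<^sup>2)"
proof -
  define e where "e i = data_mean q DQ i - coord_mean d \<eta> P i" for i
  have "gap d q \<eta> DQ 1 P - ln (real d) / (real q * \<epsilon>) \<le> (\<Sum>i<d. em_prob d q \<eta> \<epsilon> DQ P i * \<bar>e i\<bar>)"
    using gap_le_em_mean[OF P] unfolding e_def .
  also have "\<dots> \<le> (\<Sum>i<d. em_prob d q \<eta> \<epsilon> DQ P i * (2 / (3 * \<kappa>) + 3 * \<kappa> / 8 * (e i)\<^sup>2))"
    using abs_le_square_plus[OF \<kappa>] by (intro sum_mono mult_left_mono em_prob_nonneg) (simp add: add.commute)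
  also have "\<dots> = 2 / (3 * \<kappa>) + 3 * \<kappa> / 8 * (\<Sum>i<d. em_prob d q \<eta> \<epsilon> DQ P i * (e i)\<^sup>2)"
    by (rule sum_em_prob_affine[OF d_pos])
  finally show ?thesis
    unfolding e_def by simp
qed

lemma h2_exp_le_cross_entropy:
  fixes F :: "distr \<Rightarrow> real"
  assumes C: "0 \<le> C" "0 \<le> c"
    and F: "\<And>Ps. F Ps \<le> C + c * gap d q \<eta> DQ T Ps"
    and P: "grid_distr d \<eta> P" and \<kappa>: "\<kappa> > 0"
  defines "A \<equiv> ln (real d) / (real q * \<epsilon>) + 2 / (3 * \<kappa>) + \<kappa> / (4 * real q ^ 2 * \<epsilon> ^ 2)"
  shows "h2_exp d q \<eta> \<epsilon> DQ F n P Ps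
    \<le> C + c * (gap d q \<eta> DQ (T - real n) Ps + (2 - gap d q \<eta> DQ 1 P + real n * A + \<kappa> * cross_entropy d q DQ P))"
proof -
  define e where "e P i = data_mean q DQ i - coord_mean d \<eta> P i" for P i
  \<comment> \<open>\<open>- gap 1 P\<close> absorbs the error of the new distribution, the constant \<open>2\<close> keeps \<open>\<rho>\<close> nonnegative\<close>
  define \<rho> where "\<rho> n P = 2 - gap d q \<eta> DQ 1 P + real n * A + \<kappa> * cross_entropy d q DQ P" for n P
  \<comment> \<open>the bound of \<open>cross_entropy_upd_le\<close>, as a quadratic polynomial in the noise \<open>z\<close>\<close>
  define B where "B n P i z = (2 + real n * A + \<kappa> * cross_entropy d q DQ P - 3 / 8 * \<kappa> * (e P i)\<^sup>2)
    + (- \<kappa> * e P i / (4 * real q)) * z + \<kappa> / (8 * real q ^ 2) * z\<^sup>2" for n P i z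
  have "h2_exp d q \<eta> \<epsilon> DQ F n P Ps \<le> C + c * (gap d q \<eta> DQ (T - real n) Ps + \<rho> n P)"
  proof (rule h2_exp_le_potential[OF C F, where \<rho> = \<rho> and B = B])
    fix n P
    assume P: "grid_distr d \<eta> P"
    show "0 \<le> \<rho> n P"
      unfolding \<rho>_def A_def using gap_one_le_2[OF P] cross_entropy_nonneg[OF P] d_pos q_pos eps_pos \<kappa>
      by simp
    have "(\<Sum>i<d. em_prob d q \<eta> \<epsilon> DQ P i * (\<integral>z. B n P i z \<partial>laplace \<epsilon>))
        = (\<Sum>i<d. em_prob d q \<eta> \<epsilon> DQ P i * ((2 + real n * A + \<kappa> * cross_entropy d q DQ P
          + \<kappa> / (4 * real q ^ 2 * \<epsilon> ^ 2)) + (- 3 / 8 * \<kappa>) * (e P i)\<^sup>2))"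
      unfolding B_def using eps_pos q_pos
      by (intro sum.cong refl) (simp only: integral_laplace_quadratic[OF eps_pos], simp add: field_simps)
    also have "\<dots> = 2 + real n * A + \<kappa> * cross_entropy d q DQ P + \<kappa> / (4 * real q ^ 2 * \<epsilon> ^ 2)
        - 3 / 8 * \<kappa> * (\<Sum>i<d. em_prob d q \<eta> \<epsilon> DQ P i * (e P i)\<^sup>2)"
      by (subst sum_em_prob_affine[OF d_pos]) simp
    also have "\<dots> \<le> \<rho> (Suc n) P"
      using gap_le_em_mean_square[OF P \<kappa>] unfolding \<rho>_def A_def e_def by (simp add: distrib_right)
    finally show "(\<Sum>i<d. em_prob d q \<eta> \<epsilon> DQ P i * (\<integral>z. B n P i z \<partial>laplace \<epsilon>)) \<le> \<rho> (Suc n) P" .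
  next
    fix n P i z
    assume "grid_distr d \<eta> P" "i < d"
    then have "\<kappa> * cross_entropy d q DQ (upd d q \<eta> P i (wDQ q DQ i + z))
        \<le> \<kappa> * (cross_entropy d q DQ P - 3 / 8 * (e P i)\<^sup>2 - e P i * z / (4 * real q) + z\<^sup>2 / (8 * real q ^ 2))"
      unfolding e_def using \<kappa> by (intro mult_left_mono cross_entropy_upd_le) auto
    then show "gap d q \<eta> DQ 1 (upd d q \<eta> P i (wDQ q DQ i + z)) + \<rho> n (upd d q \<eta> P i (wDQ q DQ i + z))
        \<le> B n P i z"
      unfolding \<rho>_def B_def by (simp add: algebra_simps)
  next
    fix n P i
    show "integrable (laplace \<epsilon>) (B n P i)"
      unfolding B_def using eps_pos by (rule integrable_laplace_quadratic)
  qed (rule P)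
  then show ?thesis
    unfolding \<rho>_def .
qed

lemma data_mean_approx:
  assumes approx: "\<And>j. j < q \<Longrightarrow> \<bar>DQ (j, i) - sqrt (real d / 2) * v j i\<bar> \<le> \<eta>"
  shows "\<bar>wD q v i / real q - sqrt (2 / real d) * data_mean q DQ i\<bar> \<le> sqrt (2 / real d) * \<eta>"
proof -
  define s where "s = sqrt (2 / real d)"
  have s: "0 \<le> s" "s * sqrt (real d / 2) = 1"
    unfolding s_def using d_pos by (simp_all flip: real_sqrt_mult)
  have "wD q v i - s * wDQ q DQ i = (\<Sum>j<q. s * (sqrt (real d / 2) * v j i - DQ (j, i)))"
    unfolding wD_def wDQ_def using s
    by (simp add: sum_distrib_left right_diff_distrib sum_subtractf mult.assoc[symmetric])
  also have "\<bar>\<dots>\<bar> \<le> (\<Sum>j<q. s * \<eta>)"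
    using approx s
    by (intro order_trans[OF sum_abs] sum_mono) (simp add: abs_mult abs_minus_commute mult_left_mono)
  finally have "\<bar>wD q v i - s * wDQ q DQ i\<bar> \<le> real q * (s * \<eta>)"
    by simp
  then show ?thesis
    using q_pos unfolding s_def[symmetric] data_mean_def
    by (simp add: field_simps abs_div flip: diff_divide_distrib)
qed

lemma err_le_gap:
  assumes approx: "\<And>j i. j < q \<Longrightarrow> i < d \<Longrightarrow> \<bar>DQ (j, i) - sqrt (real d / 2) * v j i\<bar> \<le> \<eta>"
    and T: "T > 0"
  shows "err d q \<eta> v (\<lambda>x. Ps x / T)
    \<le> sqrt (2 / real d) * \<eta> + sqrt (2 / real d) / T * gap d q \<eta> DQ T Ps"
  unfolding err_def
proof (subst Max_le_iff; (intro ballI)?)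
  fix a
  assume "a \<in> (\<lambda>i. \<bar>wD q v i / real q - sqrt (2 / real d) * (1 / real q) * wP d q \<eta> (\<lambda>x. Ps x / T) i\<bar>) ` {..<d}"
  then obtain i where i: "i < d"
    and a: "a = \<bar>wD q v i / real q - sqrt (2 / real d) * (coord_mean d \<eta> Ps i / T)\<bar>"
    using q_pos by (auto simp: wP_eq_coord_mean coord_mean_divide)
  define s where "s = sqrt (2 / real d)"
  have "s * data_mean q DQ i - s * (coord_mean d \<eta> Ps i / T)
      = s / T * (T * data_mean q DQ i - coord_mean d \<eta> Ps i)"
    using T by (simp add: field_simps)
  then have "\<bar>s * data_mean q DQ i - s * (coord_mean d \<eta> Ps i / T)\<bar> \<le> s / T * gap d q \<eta> DQ T Ps"
    using gap_ge[OF i, of T Ps] T unfolding s_def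
    by (simp add: abs_mult) (intro divide_right_mono mult_left_mono, auto)
  moreover have "\<bar>wD q v i / real q - s * data_mean q DQ i\<bar> \<le> s * \<eta>"
    unfolding s_def using approx i by (intro data_mean_approx)
  ultimately show "a \<le> sqrt (2 / real d) * \<eta> + sqrt (2 / real d) / T * gap d q \<eta> DQ T Ps"
    unfolding a s_def[symmetric] by linarith
qed (use coords_nonempty in auto)

end

lemma ln_ge_half: "(2::real) \<le> x \<Longrightarrow> 1 / 2 \<le> ln x"
proof -
  assume x: "2 \<le> x"
  have "ln (1 / 2 :: real) \<le> 1 / 2 - 1"
    by (rule ln_le_minus_one) simp
  then have "1 / 2 \<le> ln (2::real)"
    by (simp add: ln_div)
  also have "\<dots> \<le> ln x"
    using x by simp
  finally show ?thesis .
qed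

lemma sqrt_two_ln_succ_le:
  fixes M :: real
  assumes "1 \<le> M"
  shows "sqrt (2 * ln (M + 1)) \<le> sqrt (2 * ln M) + sqrt 2"
proof -
  have "ln (M + 1) \<le> ln (2 * M)"
    using assms by simp
  also have "\<dots> \<le> ln M + 1"
    using assms ln_2_less_1 by (simp add: ln_mult)
  finally have "sqrt (2 * ln (M + 1)) \<le> sqrt (2 * ln M + 2)"
    by simp
  also have "\<dots> \<le> sqrt (2 * ln M) + sqrt 2"
    using assms by (intro sqrt_add_le_add_sqrt) auto
  finally show ?thesis .
qed

lemma privacy_term_le:
  fixes D Q e :: real
  assumes "2 \<le> D" "0 < Q" "0 < e"
  shows "sqrt (2 / D) * (ln D + 5 / 6) / (Q * e) \<le> 11 * sqrt 2 * ln D / (Q * e * sqrt D)"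
proof -
  have "sqrt (2 / D) * (ln D + 5 / 6) / (Q * e) \<le> sqrt (2 / D) * (11 * ln D) / (Q * e)"
    using ln_ge_half[OF assms(1)] assms by (intro divide_right_mono mult_left_mono) auto
  also have "\<dots> = 11 * sqrt 2 * ln D / (Q * e * sqrt D)"
    by (simp add: real_sqrt_divide mult_ac)
  finally show ?thesis .
qed

lemma grid_term_le:
  fixes D M :: real
  assumes "2 \<le> D" "1 \<le> M"
  shows "5 / 3 * sqrt (2 / D) * sqrt (ln (M + 1) / D) \<le> 2 * sqrt (2 * ln M / D\<^sup>2) + 3 / D"
proof -
  have "sqrt (2 / D) * sqrt (ln (M + 1) / D) = sqrt (2 * ln (M + 1)) / D"
    using assms by (simp add: real_sqrt_divide power2_eq_square flip: real_sqrt_mult)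
  also have "\<dots> \<le> (sqrt (2 * ln M) + 3 / 2) / D"
    using sqrt_two_ln_succ_le[OF assms(2)] assms
    by (intro divide_right_mono) (auto intro: order_trans[OF _ add_left_mono[OF real_le_lsqrt]] simp: power2_eq_square)
  finally have "5 / 3 * sqrt (2 / D) * sqrt (ln (M + 1) / D) \<le> 5 / 3 * ((sqrt (2 * ln M) + 3 / 2) / D)"
    unfolding mult.assoc by (rule mult_left_mono) simp
  also have "\<dots> \<le> 2 * (sqrt (2 * ln M) / D) + 3 / D"
    using assms by (simp add: field_simps)
  also have "sqrt (2 * ln M) / D = sqrt (2 * ln M / D\<^sup>2)"
    using assms by (simp add: real_sqrt_divide)
  finally show ?thesis .
qed

lemma potential_bound_le:
  fixes D Q e M \<eta> :: real
  assumes D: "2 \<le> D" and Q: "1 \<le> Q" and e: "0 < e" and M: "1 \<le> M" and \<eta>: "0 \<le> \<eta>"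
  defines "r \<equiv> sqrt (1 / (4 * Q\<^sup>2 * e\<^sup>2) + ln (M + 1) / D)"
  shows "sqrt (2 / D) * \<eta> + sqrt (2 / D) / D\<^sup>2 * (2 + D\<^sup>2 * (ln D / (Q * e) + 2 / (3 * (1 / r))
      + (1 / r) / (4 * Q\<^sup>2 * e\<^sup>2)) + (1 / r) * (D * ln (M + 1)))
    \<le> 2 * sqrt (2 * ln M / D\<^sup>2) + 11 * sqrt 2 * ln D / (Q * e * sqrt D) + 4 / D + \<eta>"
proof -
  define s where "s = sqrt (2 / D)"
  define \<sigma> where "\<sigma> = 1 / (4 * Q\<^sup>2 * e\<^sup>2)"
  define \<tau> where "\<tau> = ln (M + 1) / D"
  have Q0: "0 < Q"
    using Q by simp
  have \<sigma>: "0 < \<sigma>" "sqrt \<sigma> = 1 / (2 * Q * e)" and \<tau>: "0 \<le> \<tau>"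
    unfolding \<sigma>_def \<tau>_def using Q e M D by (simp_all add: real_sqrt_divide real_sqrt_mult power_mult_distrib)
  have r: "0 < r" "r * r = \<sigma> + \<tau>"
    unfolding r_def \<sigma>_def[symmetric] \<tau>_def[symmetric] using \<sigma> \<tau> by simp_all
  have s: "0 \<le> s" "s \<le> 1"
    unfolding s_def using D by simp_all
  \<comment> \<open>\<open>\<kappa> = 1 / r\<close> balances the two \<open>\<kappa>\<close>-dependent terms, which then both become multiples of \<open>r\<close>\<close>
  have "sqrt (2 / D) / D\<^sup>2 * (2 + D\<^sup>2 * (ln D / (Q * e) + 2 / (3 * (1 / r)) + (1 / r) / (4 * Q\<^sup>2 * e\<^sup>2))
      + (1 / r) * (D * ln (M + 1)))
      = 2 * s / D\<^sup>2 + s * ln D / (Q * e) + s * (2 * r / 3 + (\<sigma> + \<tau>) / r)"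
    unfolding s_def \<sigma>_def \<tau>_def using D r(1) by (simp add: field_simps power2_eq_square)
  also have "(\<sigma> + \<tau>) / r = r"
    using r by (simp add: field_simps)
  also have "s * (2 * r / 3 + r) \<le> 5 / 3 * s * sqrt \<sigma> + 5 / 3 * s * sqrt \<tau>"
    using sqrt_add_le_add_sqrt[OF less_imp_le[OF \<sigma>(1)] \<tau>] s
    unfolding r_def \<sigma>_def[symmetric] \<tau>_def[symmetric] by (simp add: mult_left_mono flip: distrib_left)
  finally have "sqrt (2 / D) / D\<^sup>2 * (2 + D\<^sup>2 * (ln D / (Q * e) + 2 / (3 * (1 / r))
      + (1 / r) / (4 * Q\<^sup>2 * e\<^sup>2)) + (1 / r) * (D * ln (M + 1)))
      \<le> 2 * s / D\<^sup>2 + (s * ln D / (Q * e) + 5 / 3 * s * sqrt \<sigma>) + 5 / 3 * s * sqrt \<tau>"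
    by simp
  moreover have "s * ln D / (Q * e) + 5 / 3 * s * sqrt \<sigma> = s * (ln D + 5 / 6) / (Q * e)"
    using Q e unfolding \<sigma>(2) by (simp add: field_simps)
  moreover have "2 * s / D\<^sup>2 \<le> 1 / D"
    using s D by (simp add: field_simps power2_eq_square)
  moreover have "s * \<eta> \<le> \<eta>"
    using mult_left_le_one_le[OF \<eta> s] by simp
  ultimately show ?thesis
    using privacy_term_le[OF D Q0 e] grid_term_le[OF D M] unfolding s_def \<tau>_def by linarith
qed

definition cond_expected_error :: "nat \<Rightarrow> nat \<Rightarrow> real \<Rightarrow> real \<Rightarrow> (nat \<Rightarrow> nat \<Rightarrow> real)
    \<Rightarrow> (nat \<times> nat \<Rightarrow> real) \<Rightarrow> real" where
  "cond_expected_error d q \<eta> \<epsilon> v DQ =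
     h2_exp d q \<eta> \<epsilon> DQ (\<lambda>Ps. err d q \<eta> v (\<lambda>s. Ps s / real (d\<^sup>2))) (d\<^sup>2) (P0 d \<eta>) (\<lambda>_. 0)"

context mw_run
begin

lemma cond_expected_error_le_trivial:
  assumes approx: "\<And>j i. j < q \<Longrightarrow> i < d \<Longrightarrow> \<bar>DQ (j, i) - sqrt (real d / 2) * v j i\<bar> \<le> \<eta>"
  shows "cond_expected_error d q \<eta> \<epsilon> v DQ \<le> sqrt (2 / real d) * \<eta> + 2 * sqrt (2 / real d)"
proof -
  have "cond_expected_error d q \<eta> \<epsilon> v DQ \<le> sqrt (2 / real d) * \<eta> + sqrt (2 / real d) / real (d\<^sup>2)
      * (gap d q \<eta> DQ (real (d\<^sup>2) - real (d\<^sup>2)) (\<lambda>_. 0) + 2 * real (d\<^sup>2))"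
    unfolding cond_expected_error_def using eta_pos d_pos err_le_gap[of v "real (d\<^sup>2)"] approx
    by (intro h2_exp_le_trivial grid_distr_P0) auto
  then show ?thesis
    using d_pos by (simp add: gap_zero)
qed

lemma cond_expected_error_le_cross_entropy:
  assumes approx: "\<And>j i. j < q \<Longrightarrow> i < d \<Longrightarrow> \<bar>DQ (j, i) - sqrt (real d / 2) * v j i\<bar> \<le> \<eta>"
    and \<kappa>: "\<kappa> > 0"
  shows "cond_expected_error d q \<eta> \<epsilon> v DQ \<le> sqrt (2 / real d) * \<eta> + sqrt (2 / real d) / (real d)\<^sup>2
    * (2 + (real d)\<^sup>2 * (ln (real d) / (real q * \<epsilon>) + 2 / (3 * \<kappa>) + \<kappa> / (4 * real q ^ 2 * \<epsilon> ^ 2))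
      + \<kappa> * (real d * ln (real N + 1)))"
    (is "_ \<le> ?bound")
proof -
  have "cond_expected_error d q \<eta> \<epsilon> v DQ
      \<le> sqrt (2 / real d) * \<eta> + sqrt (2 / real d) / real (d\<^sup>2)
        * (gap d q \<eta> DQ (real (d\<^sup>2) - real (d\<^sup>2)) (\<lambda>_. 0) + (2 - gap d q \<eta> DQ 1 (P0 d \<eta>) + real (d\<^sup>2)
          * (ln (real d) / (real q * \<epsilon>) + 2 / (3 * \<kappa>) + \<kappa> / (4 * real q ^ 2 * \<epsilon> ^ 2))
          + \<kappa> * cross_entropy d q DQ (P0 d \<eta>)))"
    unfolding cond_expected_error_def using eta_pos d_pos err_le_gap[of v "real (d\<^sup>2)"] approx
    by (intro h2_exp_le_cross_entropy grid_distr_P0 \<kappa>) auto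
  also have "\<dots> \<le> ?bound"
    using gap_nonneg[of 1 "P0 d \<eta>"]
    by (simp add: gap_zero cross_entropy_P0) (intro divide_right_mono mult_left_mono; simp)
  finally show ?thesis .
qed

lemma cond_expected_error_le:
  assumes approx: "\<And>j i. j < q \<Longrightarrow> i < d \<Longrightarrow> \<bar>DQ (j, i) - sqrt (real d / 2) * v j i\<bar> \<le> \<eta>"
  shows "cond_expected_error d q \<eta> \<epsilon> v DQ
    \<le> 2 * sqrt (2 * ln (real N) / real d ^ 2) + 11 * sqrt 2 * ln (real d) / (real q * \<epsilon> * sqrt (real d))
      + 4 / real d + \<eta>"
    (is "_ \<le> ?bound")
proof (cases "d = 1")
  case True
  \<comment> \<open>here \<open>ln d = 0\<close> and the claim has no \<open>\<epsilon>\<close>-term left, so use the trivial bound \<open>gap \<le> 2\<close>\<close>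
  have "\<eta> \<le> 2"
    using N_pos eta_pos N_mult_eta mult_right_mono[of 1 "real N" \<eta>] by simp
  moreover have "sqrt 2 \<le> (3 / 2 :: real)"
    by (rule real_le_lsqrt) (auto simp: power2_eq_square)
  moreover have "sqrt 2 * \<eta> \<le> 3 / 2 * \<eta>"
    using calculation(2) eta_pos by (intro mult_right_mono) auto
  moreover have "0 \<le> sqrt (2 * ln (real N))"
    using N_pos by simp
  moreover have "?bound = 2 * sqrt (2 * ln (real N)) + 4 + \<eta>"
    using True by simp
  moreover have "cond_expected_error d q \<eta> \<epsilon> v DQ \<le> sqrt 2 * \<eta> + 2 * sqrt 2"
    using cond_expected_error_le_trivial[OF approx] True by simp
  ultimately show ?thesis
    by linarith
next
  case False
  define r where "r = sqrt (1 / (4 * real q ^ 2 * \<epsilon> ^ 2) + ln (real N + 1) / real d)"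
  have "r > 0"
    unfolding r_def using q_pos eps_pos d_pos N_pos by (intro real_sqrt_gt_zero add_pos_nonneg) auto
  then show ?thesis
    using cond_expected_error_le_cross_entropy[OF approx, of "1 / r"]
      potential_bound_le[of "real d" "real q" \<epsilon> "real N" \<eta>] False d_pos q_pos eps_pos N_pos eta_pos
    unfolding r_def by simp
qed

end

theorem theorem3:
  fixes d q :: nat and \<eta> \<epsilon> :: real and v :: "nat \<Rightarrow> nat \<Rightarrow> real"
  assumes "d \<ge> 1" and "q \<ge> 1" and "\<eta> > 0" and "\<epsilon> > 0"
    and "\<exists>N::nat. 2 / \<eta> = real N"
    and "\<forall>j<q. \<forall>i<d. \<bar>v j i\<bar> \<le> sqrt (2 / real d)"
  shows "h2_expected_error d q \<eta> \<epsilon> (d^2) v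
    \<le> 2 * sqrt (2 * ln (2 / \<eta>) / real d ^ 2)
      + 11 * sqrt 2 * ln (real d) / (real q * \<epsilon> * sqrt (real d))
      + 4 / real d + 2 * real d * exp (- real q / 4) + \<eta>"
proof -
  obtain N :: nat where N: "2 / \<eta> = real N"
    using assms(5) by blast
  interpret grid_params \<eta> N
    using assms(3) N by unfold_locales
  define bound where "bound = 2 * sqrt (2 * ln (real N) / real d ^ 2)
    + 11 * sqrt 2 * ln (real d) / (real q * \<epsilon> * sqrt (real d)) + 4 / real d + \<eta>"
  have "cond_expected_error d q \<eta> \<epsilon> v DQ \<le> bound"
    if "DQ \<in> set_pmf (quant_data d q \<eta> v)" for DQ
  proof -
    interpret mw_run \<eta> N d q \<epsilon> DQ
      using assms(1,2,4) quant_data_approx[OF that assms(6)] by unfold_locales auto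
    show ?thesis
      unfolding bound_def using quant_data_approx[OF that assms(6)] by (intro cond_expected_error_le) auto
  qed
  moreover have "0 \<le> bound"
    unfolding bound_def using assms(1-4) N_pos by simp
  ultimately have "h2_expected_error d q \<eta> \<epsilon> (d^2) v \<le> bound"
    unfolding h2_expected_error_def cond_expected_error_def[symmetric] by (rule pmf_expectation_le_const)
  moreover have "0 \<le> 2 * real d * exp (- real q / 4)"
    by simp
  ultimately show ?thesis
    unfolding bound_def N by linarith
qed

end
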